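(* Let $G$ be a finitely generated group, $p$ a prime, and $x\in G$. Then $RG_p\big(G/\langle\langle x\rangle\rangle\big)\ge RG_p(G)-1$.
   Context: $\langle\langle x\rangle\rangle$ denotes the normal closure of $x$ in $G$. For a group $A$, $d(A)$ is the minimal number of generators and $d_p(A)=d\big(A/[A,A]A^p\big)$. For a finitely generated group $G$, $RG_p(G)=\inf_H\frac{d_p(H)-1}{[G:H]}$, the infimum over normal subgroups $H\trianglelefteq G$ of $p$-power index. *)

theory Defs
  imports "HOL-Algebra.Algebra" "HOL-Analysis.Analysis"
begin

definition fin_gen :: "('a, 'b) monoid_scheme \<Rightarrow> bool" where
  "fin_gen G \<longleftrightarrow> (\<exists>S. finite S \<and> S \<subseteq> carrier G \<and> generate G S = carrier G)"

definition min_gens :: "('a, 'b) monoid_scheme \<Rightarrow> nat" where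
  "min_gens A = (LEAST n. \<exists>S. finite S \<and> card S = n \<and> S \<subseteq> carrier A \<and> generate A S = carrier A)"

definition frattini_p :: "('a, 'b) monoid_scheme \<Rightarrow> nat \<Rightarrow> 'a set" where
  "frattini_p A p = generate A (derived_set A (carrier A) \<union> {a [^]\<^bsub>A\<^esub> p | a. a \<in> carrier A})"

definition d_p :: "nat \<Rightarrow> ('a, 'b) monoid_scheme \<Rightarrow> nat" where
  "d_p p A = min_gens (A Mod frattini_p A p)"

definition normal_closure :: "('a, 'b) monoid_scheme \<Rightarrow> 'a \<Rightarrow> 'a set" where
  "normal_closure G x = generate G {g \<otimes>\<^bsub>G\<^esub> x \<otimes>\<^bsub>G\<^esub> inv\<^bsub>G\<^esub> g | g. g \<in> carrier G}"

definition RG_p :: "nat \<Rightarrow> ('a, 'b) monoid_scheme \<Rightarrow> real" where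
  "RG_p p G = Inf {(real (d_p p (G\<lparr>carrier := H\<rparr>)) - 1) / real (card (rcosets\<^bsub>G\<^esub> H)) | H.
                    H \<lhd> G \<and> (\<exists>k. card (rcosets\<^bsub>G\<^esub> H) = p ^ k)}"

end

theory Submission
  imports Defs
begin

text \<open>Let \<open>N\<close> be the normal closure of \<open>x\<close> and \<open>K\<close> a normal subgroup of index \<open>n = p\<^sup>k\<close>
  in \<open>G/N\<close>, with preimage \<open>H\<close> of the same index in \<open>G\<close>. Inside \<open>H\<close>, the subgroup \<open>N\<close> is normally
  generated by the \<open>n\<close> conjugates \<open>t x t\<inverse>\<close>, \<open>t\<close> running over a transversal of \<open>H\<close>. Lifting a
  set that generates \<open>K\<close> modulo \<open>[K,K]K\<^sup>p\<close> and adding these conjugates therefore generates \<open>H\<close>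
  modulo \<open>[H,H]H\<^sup>p\<close>, whence \<open>d\<^sub>p(H) \<le> d\<^sub>p(K) + n\<close>, i.e.
  \<open>(d\<^sub>p(H) - 1)/n - 1 \<le> (d\<^sub>p(K) - 1)/n\<close>; taking infima gives the claim. Schreier's lemma makes
  \<open>K\<close> finitely generated, so that \<open>d\<^sub>p(K)\<close> is realised by an actual finite set.\<close>

lemma (in group) subgroup_frattini_p: "subgroup (frattini_p G p) G"
  unfolding frattini_p_def using derived_set_in_carrier by (intro generate_is_subgroup) auto

lemma (in group) derived_set_subset_frattini_p: "derived_set G (carrier G) \<subseteq> frattini_p G p"
  unfolding frattini_p_def by (blast intro: generate.incl)

lemma (in group) normal_if_derived_set_subset:
  assumes W: "subgroup W G" and "derived_set G (carrier G) \<subseteq> W"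
  shows "W \<lhd> G"
proof (rule normal_invI[OF W])
  fix g w assume g: "g \<in> carrier G" and w: "w \<in> W"
  have wc: "w \<in> carrier G" using w subgroup.subset[OF W] by blast
  have "g \<otimes> w \<otimes> inv g \<otimes> inv w \<in> W" using assms(2) g wc by blast
  then have "(g \<otimes> w \<otimes> inv g \<otimes> inv w) \<otimes> w \<in> W" using w by (rule subgroup.m_closed[OF W])
  then show "g \<otimes> w \<otimes> inv g \<in> W" using g wc by (simp add: m_assoc)
qed

lemma (in group) frattini_p_normal: "frattini_p G p \<lhd> G"
  by (rule normal_if_derived_set_subset[OF subgroup_frattini_p derived_set_subset_frattini_p])

lemma (in group_hom) frattini_p_image_subset:
  assumes surj: "h ` carrier G = carrier H"
  shows "frattini_p H p \<subseteq> h ` frattini_p G p"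
proof -
  let ?S = "derived_set G (carrier G) \<union> {a [^] p | a. a \<in> carrier G}"
  have "derived_set H (carrier H) \<subseteq> h ` ?S"
  proof
    fix y assume "y \<in> derived_set H (carrier H)"
    then obtain a' b' where "a' \<in> carrier H" "b' \<in> carrier H"
      and y: "y = a' \<otimes>\<^bsub>H\<^esub> b' \<otimes>\<^bsub>H\<^esub> inv\<^bsub>H\<^esub> a' \<otimes>\<^bsub>H\<^esub> inv\<^bsub>H\<^esub> b'"
      by auto
    then obtain a b where ab: "a \<in> carrier G" "b \<in> carrier G" "a' = h a" "b' = h b"
      unfolding surj[symmetric] by auto
    then have "y = h (a \<otimes> b \<otimes> inv a \<otimes> inv b)" using y by simp
    moreover have "a \<otimes> b \<otimes> inv a \<otimes> inv b \<in> derived_set G (carrier G)" using ab by blast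
    ultimately show "y \<in> h ` ?S" by blast
  qed
  moreover have "{b [^]\<^bsub>H\<^esub> p | b. b \<in> carrier H} \<subseteq> h ` ?S"
  proof
    fix y assume "y \<in> {b [^]\<^bsub>H\<^esub> p | b. b \<in> carrier H}"
    then obtain a where "a \<in> carrier G" "y = h a [^]\<^bsub>H\<^esub> p"
      unfolding surj[symmetric] by auto
    then show "y \<in> h ` ?S" by (auto simp flip: hom_nat_pow)
  qed
  ultimately have "generate H (derived_set H (carrier H) \<union> {b [^]\<^bsub>H\<^esub> p | b. b \<in> carrier H})
      \<subseteq> generate H (h ` ?S)"
    by (intro H.mono_generate Un_least)
  also have "\<dots> = h ` generate G ?S"
    using G.derived_set_in_carrier by (intro generate_img) auto
  finally show ?thesis unfolding frattini_p_def .
qed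

lemma (in normal) group_hom_Mod: "group_hom G (G Mod H) (\<lambda>a. H #> a)"
  by (intro group_hom.intro group_hom_axioms.intro is_group factorgroup_is_group r_coset_hom_Mod)

lemma (in group_hom) subgroup_vimage:
  assumes K: "subgroup K H"
  shows "subgroup {x \<in> carrier G. h x \<in> K} G"
  by (rule G.subgroupI) (auto simp: subgroup.one_closed[OF K] subgroup.m_closed[OF K]
      subgroup.m_inv_closed[OF K] intro!: exI[of _ \<one>])

lemma image_vimage_on_eq:
  assumes "f ` A = B" "C \<subseteq> B"
  shows "f ` {x \<in> A. f x \<in> C} = C"
  using assms by blast

lemma (in group_hom) normal_vimage:
  assumes K: "K \<lhd> H"
  shows "{x \<in> carrier G. h x \<in> K} \<lhd> G"
proof (rule G.normal_invI)
  show "subgroup {x \<in> carrier G. h x \<in> K} G"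
    using K by (intro subgroup_vimage normal_imp_subgroup)
  fix g x assume "g \<in> carrier G" "x \<in> {x \<in> carrier G. h x \<in> K}"
  then show "g \<otimes> x \<otimes> inv g \<in> {x \<in> carrier G. h x \<in> K}"
    using normal.inv_op_closed2[OF K] by simp
qed

lemma (in group_hom) subgroup_eq_carrier_if_image:
  assumes W: "subgroup W G" and "kernel G H h \<subseteq> W" and "h ` carrier G \<subseteq> h ` W"
  shows "W = carrier G"
proof
  show "W \<subseteq> carrier G" using subgroup.subset[OF W] .
  show "carrier G \<subseteq> W"
  proof
    fix a assume a: "a \<in> carrier G"
    then obtain w where w: "w \<in> W" "h a = h w" using assms(3) by blast
    have wc: "w \<in> carrier G" using w(1) subgroup.subset[OF W] by blast
    have "a \<otimes> inv w \<in> kernel G H h" using a wc w(2) by (simp add: kernel_def)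
    then have "(a \<otimes> inv w) \<otimes> w \<in> W" using assms(2) w(1) subgroup.m_closed[OF W] by blast
    then show "a \<in> W" using a wc by (simp add: G.m_assoc)
  qed
qed

lemma (in normal) kernel_Mod: "kernel G (G Mod H) (\<lambda>a. H #> a) = H"
proof
  show "kernel G (G Mod H) (\<lambda>a. H #> a) \<subseteq> H"
    unfolding kernel_def using coset_join1[OF _ _ subgroup_axioms] by auto
  show "H \<subseteq> kernel G (G Mod H) (\<lambda>a. H #> a)"
    unfolding kernel_def using coset_join2[OF _ subgroup_axioms] subset by auto
qed

lemma (in normal) generate_Mod_eq_carrier_iff:
  assumes S: "S \<subseteq> carrier G"
  shows "generate (G Mod H) ((\<lambda>a. H #> a) ` S) = carrier (G Mod H) \<longleftrightarrow>
    (\<forall>W. subgroup W G \<longrightarrow> S \<subseteq> W \<longrightarrow> H \<subseteq> W \<longrightarrow> W = carrier G)"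
    (is "?C = _ \<longleftrightarrow> _")
proof -
  interpret \<pi>: group_hom G "G Mod H" "\<lambda>a. H #> a" by (rule group_hom_Mod)
  have carrier_Mod: "carrier (G Mod H) = (\<lambda>a. H #> a) ` carrier G"
    by (rule carrier_FactGroup)
  show ?thesis
  proof (intro iffI allI impI)
    fix W assume gen: "?C = carrier (G Mod H)"
      and W: "subgroup W G" "S \<subseteq> W" "H \<subseteq> W"
    have "(\<lambda>a. H #> a) ` S \<subseteq> (\<lambda>a. H #> a) ` W" using W(2) by (rule image_mono)
    then have "?C \<subseteq> (\<lambda>a. H #> a) ` W"
      by (rule \<pi>.H.generate_subgroup_incl[OF _ \<pi>.subgroup_img_is_subgroup[OF W(1)]])
    then have "(\<lambda>a. H #> a) ` carrier G \<subseteq> (\<lambda>a. H #> a) ` W"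
      by (simp only: gen carrier_Mod)
    then show "W = carrier G"
      using W(3) by (intro \<pi>.subgroup_eq_carrier_if_image[OF W(1)]) (simp_all only: kernel_Mod)
  next
    assume all: "\<forall>W. subgroup W G \<longrightarrow> S \<subseteq> W \<longrightarrow> H \<subseteq> W \<longrightarrow> W = carrier G"
    have img: "(\<lambda>a. H #> a) ` S \<subseteq> carrier (G Mod H)"
      using S unfolding carrier_Mod by (rule image_mono)
    then have C: "subgroup ?C (G Mod H)" by (rule \<pi>.H.generate_is_subgroup)
    have "{a \<in> carrier G. H #> a \<in> ?C} = carrier G"
    proof (rule all[rule_format])
      show "subgroup {a \<in> carrier G. H #> a \<in> ?C} G" by (rule \<pi>.subgroup_vimage[OF C])
      show "S \<subseteq> {a \<in> carrier G. H #> a \<in> ?C}"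
      proof
        fix a assume "a \<in> S"
        then show "a \<in> {a \<in> carrier G. H #> a \<in> ?C}"
          using S generate.incl[of "H #> a" "(\<lambda>a. H #> a) ` S" "G Mod H"] by blast
      qed
      show "H \<subseteq> {a \<in> carrier G. H #> a \<in> ?C}"
      proof
        fix a assume a: "a \<in> H"
        have "H \<in> ?C" using generate.one[of "G Mod H"] by simp
        then show "a \<in> {a \<in> carrier G. H #> a \<in> ?C}"
          using a coset_join2[OF _ subgroup_axioms] subset by auto
      qed
    qed
    then have "carrier (G Mod H) \<subseteq> ?C" unfolding carrier_Mod by blast
    then show "?C = carrier (G Mod H)" using \<pi>.H.generate_in_carrier[OF img] by blast
  qed
qed

definition generates_mod_frattini_p :: "nat \<Rightarrow> ('a, 'b) monoid_scheme \<Rightarrow> 'a set \<Rightarrow> bool" where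
  "generates_mod_frattini_p p G S \<longleftrightarrow> S \<subseteq> carrier G \<and>
     (\<forall>W. subgroup W G \<longrightarrow> S \<subseteq> W \<longrightarrow> frattini_p G p \<subseteq> W \<longrightarrow> W = carrier G)"

lemma (in group) d_p_le_card:
  assumes "finite S" and S: "generates_mod_frattini_p p G S"
  shows "d_p p G \<le> card S"
proof -
  interpret \<Phi>: normal "frattini_p G p" G by (rule frattini_p_normal)
  let ?\<pi> = "\<lambda>a. frattini_p G p #> a"
  have "generate (G Mod frattini_p G p) (?\<pi> ` S) = carrier (G Mod frattini_p G p)"
    using S \<Phi>.generate_Mod_eq_carrier_iff unfolding generates_mod_frattini_p_def by blast
  moreover have "?\<pi> ` S \<subseteq> carrier (G Mod frattini_p G p)"
    using S unfolding generates_mod_frattini_p_def carrier_FactGroup by blast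
  ultimately have "min_gens (G Mod frattini_p G p) \<le> card (?\<pi> ` S)"
    unfolding min_gens_def using \<open>finite S\<close> by (intro Least_le) blast
  also have "\<dots> \<le> card S" using \<open>finite S\<close> by (rule card_image_le)
  finally show ?thesis unfolding d_p_def .
qed

lemma (in group) ex_generates_mod_frattini_p:
  assumes "fin_gen G"
  obtains S where "finite S" "card S = d_p p G" "generates_mod_frattini_p p G S"
proof -
  interpret \<Phi>: normal "frattini_p G p" G by (rule frattini_p_normal)
  interpret \<pi>: group_hom G "G Mod frattini_p G p" "\<lambda>a. frattini_p G p #> a"
    by (rule \<Phi>.group_hom_Mod)
  let ?Q = "G Mod frattini_p G p" and ?\<pi> = "\<lambda>a. frattini_p G p #> a"
  let ?gens = "\<lambda>n. \<exists>F. finite F \<and> card F = n \<and> F \<subseteq> carrier ?Q \<and> generate ?Q F = carrier ?Q"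
  obtain F where F: "finite F" "F \<subseteq> carrier G" "generate G F = carrier G"
    using assms unfolding fin_gen_def by blast
  have "generate ?Q (?\<pi> ` F) = carrier ?Q"
    using \<pi>.generate_img[OF F(2)] F(3) by (simp add: carrier_FactGroup)
  moreover have "?\<pi> ` F \<subseteq> carrier ?Q" using F(2) unfolding carrier_FactGroup by (rule image_mono)
  ultimately have "?gens (card (?\<pi> ` F))" using F(1) by blast
  then have "?gens (d_p p G)" unfolding d_p_def min_gens_def by (rule LeastI)
  then obtain F' where F': "finite F'" "card F' = d_p p G" "F' \<subseteq> ?\<pi> ` carrier G"
      "generate ?Q F' = carrier ?Q"
    by (auto simp: carrier_FactGroup)
  then obtain S where S: "S \<subseteq> carrier G" "inj_on ?\<pi> S" "F' = ?\<pi> ` S"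
    by (auto simp: subset_image_inj)
  show ?thesis
  proof
    show "finite S" using F'(1) S finite_image_iff by blast
    show "card S = d_p p G" using F'(2) S by (simp add: card_image)
    show "generates_mod_frattini_p p G S"
      using F'(4) S \<Phi>.generate_Mod_eq_carrier_iff unfolding generates_mod_frattini_p_def by blast
  qed
qed

lemma (in group) ex_right_transversal:
  assumes K: "subgroup K G" and fin: "finite (rcosets K)"
  obtains T where "finite T" "T \<subseteq> carrier G" "card T \<le> card (rcosets K)"
    "\<And>g. g \<in> carrier G \<Longrightarrow> \<exists>k\<in>K. \<exists>t\<in>T. g = k \<otimes> t"
proof -
  define rep where "rep c = (SOME t. t \<in> c)" for c :: "'a set"
  have Kc: "K \<subseteq> carrier G" using subgroup.subset[OF K] .
  have rep: "rep (K #> g) \<in> K #> g" if "g \<in> carrier G" for g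
    unfolding rep_def using rcos_self[OF that K] by (rule someI)
  show ?thesis
  proof
    show "finite (rep ` (rcosets K))" using fin by simp
    show "card (rep ` (rcosets K)) \<le> card (rcosets K)" using fin by (rule card_image_le)
    show "rep ` (rcosets K) \<subseteq> carrier G"
      using rep r_coset_subset_G[OF Kc] unfolding RCOSETS_def by blast
    fix g assume g: "g \<in> carrier G"
    have "K #> g = K #> rep (K #> g)" by (rule repr_independence[OF rep[OF g] g K])
    then have "g \<in> K #> rep (K #> g)" using rcos_self[OF g K] by simp
    then obtain k where "k \<in> K" "g = k \<otimes> rep (K #> g)" unfolding r_coset_def by blast
    moreover have "rep (K #> g) \<in> rep ` (rcosets K)" using rcosetsI[OF Kc g] by blast
    ultimately show "\<exists>k\<in>K. \<exists>t\<in>rep ` (rcosets K). g = k \<otimes> t" by blast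
  qed
qed

text \<open>Taking all products \<open>t s t'\<inverse>\<close> that lie in \<open>K\<close> (not only those with \<open>t'\<close> the representative
  of \<open>t s\<close>), together with the elements of \<open>T\<close> lying in \<open>K\<close>, avoids both fixing a choice of
  representatives and requiring \<open>\<one> \<in> T\<close>.\<close>

definition schreier_generators ::
    "('a, 'b) monoid_scheme \<Rightarrow> 'a set \<Rightarrow> 'a set \<Rightarrow> 'a set \<Rightarrow> 'a set" where
  "schreier_generators G K S T = K \<inter> (T \<union> (\<lambda>(t, s, t'). t \<otimes>\<^bsub>G\<^esub> s \<otimes>\<^bsub>G\<^esub> inv\<^bsub>G\<^esub> t') `
     (T \<times> (S \<union> m_inv G ` S) \<times> T))"

lemma finite_schreier_generators: "finite S \<Longrightarrow> finite T \<Longrightarrow> finite (schreier_generators G K S T)"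
  unfolding schreier_generators_def by simp

lemma (in group) schreier_generators_right_mult_closed:
  assumes K: "subgroup K G" and S: "S \<subseteq> carrier G"
    and T: "T \<subseteq> carrier G" "\<And>g. g \<in> carrier G \<Longrightarrow> \<exists>k\<in>K. \<exists>t\<in>T. g = k \<otimes> t"
    and "g \<in> generate G S" "l \<in> generate G (schreier_generators G K S T)" "t \<in> T"
  shows "\<exists>l'\<in>generate G (schreier_generators G K S T). \<exists>t'\<in>T. l \<otimes> t \<otimes> g = l' \<otimes> t'"
proof -
  define L where "L = generate G (schreier_generators G K S T)"
  have "schreier_generators G K S T \<subseteq> carrier G"
    unfolding schreier_generators_def using subgroup.subset[OF K] by blast
  then have L: "subgroup L G" unfolding L_def by (rule generate_is_subgroup)
  then have Lc: "L \<subseteq> carrier G" by (rule subgroup.subset)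
  have step: "\<exists>l'\<in>L. \<exists>t'\<in>T. l \<otimes> t \<otimes> s = l' \<otimes> t'"
    if l: "l \<in> L" and t: "t \<in> T" and s: "s \<in> S \<union> m_inv G ` S" for l t s
  proof -
    have sc: "s \<in> carrier G" and tc: "t \<in> carrier G" and lc: "l \<in> carrier G"
      using s t l S T(1) Lc by auto
    obtain k t' where k: "k \<in> K" "t' \<in> T" "t \<otimes> s = k \<otimes> t'"
      using T(2)[of "t \<otimes> s"] sc tc by blast
    have kc: "k \<in> carrier G" and t'c: "t' \<in> carrier G" using k subgroup.subset[OF K] T(1) by auto
    have "(t, s, t') \<in> T \<times> (S \<union> m_inv G ` S) \<times> T" using t s k(2) by blast
    then have "t \<otimes> s \<otimes> inv t' \<in> (\<lambda>(t, s, t'). t \<otimes> s \<otimes> inv t') ` (T \<times> (S \<union> m_inv G ` S) \<times> T)"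
      by (rule rev_image_eqI) simp
    moreover have "k = t \<otimes> s \<otimes> inv t'"
      using inv_solve_right[OF kc m_closed[OF tc sc] t'c] k(3) by blast
    ultimately have "k \<in> schreier_generators G K S T"
      unfolding schreier_generators_def using k(1) by blast
    then have "k \<in> L" unfolding L_def by (rule generate.incl)
    then have "l \<otimes> k \<in> L" by (rule subgroup.m_closed[OF L l])
    moreover have "l \<otimes> t \<otimes> s = (l \<otimes> k) \<otimes> t'" using k(3) lc tc sc kc t'c by (simp add: m_assoc)
    ultimately show ?thesis using k(2) by blast
  qed
  show ?thesis
    using assms(5-7) unfolding L_def[symmetric]
  proof (induction g arbitrary: l t rule: generate.induct)
    case one
    then show ?case using Lc T(1) by (metis r_one m_closed subsetD)
  next
    case (incl s)
    then show ?case by (intro step) auto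
  next
    case (inv s)
    then show ?case by (intro step) auto
  next
    case (eng a b)
    obtain l1 t1 where 1: "l1 \<in> L" "t1 \<in> T" "l \<otimes> t \<otimes> a = l1 \<otimes> t1"
      using eng.IH(1) eng.prems by blast
    obtain l2 t2 where 2: "l2 \<in> L" "t2 \<in> T" "l1 \<otimes> t1 \<otimes> b = l2 \<otimes> t2"
      using eng.IH(2) 1 by blast
    have "a \<in> carrier G" "b \<in> carrier G" "l \<otimes> t \<in> carrier G"
      using eng.hyps generate_in_carrier[OF S] eng.prems Lc T(1) by auto
    then have "l \<otimes> t \<otimes> (a \<otimes> b) = l1 \<otimes> t1 \<otimes> b" using 1(3) by (simp add: m_assoc[symmetric])
    then show ?case using 2 by auto
  qed
qed

lemma (in group) generate_schreier_generators:
  assumes K: "subgroup K G" and S: "S \<subseteq> carrier G" "generate G S = carrier G"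
    and T: "T \<subseteq> carrier G" "\<And>g. g \<in> carrier G \<Longrightarrow> \<exists>k\<in>K. \<exists>t\<in>T. g = k \<otimes> t"
  shows "generate G (schreier_generators G K S T) = K"
proof
  define L where "L = generate G (schreier_generators G K S T)"
  have Kc: "K \<subseteq> carrier G" using subgroup.subset[OF K] .
  have L: "subgroup L G" unfolding L_def schreier_generators_def
    using Kc by (intro generate_is_subgroup) blast
  show LK: "L \<subseteq> K" unfolding L_def schreier_generators_def
    by (rule generate_subgroup_incl[OF _ K]) blast
  show "K \<subseteq> L"
  proof
    fix k assume k: "k \<in> K"
    obtain t where t: "t \<in> T" using T(2)[OF one_closed] by blast
    have tc: "t \<in> carrier G" and kc: "k \<in> carrier G" using t k T(1) Kc by auto
    obtain l' t' where l't': "l' \<in> L" "t' \<in> T" "\<one> \<otimes> t \<otimes> (inv t \<otimes> k) = l' \<otimes> t'"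
      using schreier_generators_right_mult_closed[OF K S(1) T, of "inv t \<otimes> k" \<one> t]
        S(2) tc kc t subgroup.one_closed[OF L] unfolding L_def by blast
    have l'c: "l' \<in> carrier G" and t'c: "t' \<in> carrier G" using l't' LK Kc T(1) by auto
    have k_eq: "k = l' \<otimes> t'" using l't'(3) tc kc by (simp add: m_assoc[symmetric])
    then have "t' = inv l' \<otimes> k" using l'c t'c by (simp add: m_assoc[symmetric])
    moreover have "inv l' \<in> K" using l't'(1) LK subgroup.m_inv_closed[OF K] by blast
    ultimately have "t' \<in> schreier_generators G K S T"
      unfolding schreier_generators_def using k l't'(2) subgroup.m_closed[OF K] by simp
    then have "t' \<in> L" unfolding L_def by (rule generate.incl)
    then show "k \<in> L" using k_eq l't'(1) subgroup.m_closed[OF L] by simp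
  qed
qed

lemma (in group) fin_gen_subgroup_of_finite_index:
  assumes "fin_gen G" and K: "subgroup K G" "finite (rcosets K)"
  shows "fin_gen (G\<lparr>carrier := K\<rparr>)"
proof -
  obtain S where S: "finite S" "S \<subseteq> carrier G" "generate G S = carrier G"
    using assms(1) unfolding fin_gen_def by blast
  obtain T where T: "finite T" "T \<subseteq> carrier G" "\<And>g. g \<in> carrier G \<Longrightarrow> \<exists>k\<in>K. \<exists>t\<in>T. g = k \<otimes> t"
    using ex_right_transversal[OF K] by metis
  have "generate G (schreier_generators G K S T) = K"
    by (rule generate_schreier_generators[OF K(1) S(2,3) T(2,3)])
  moreover have Y: "schreier_generators G K S T \<subseteq> K" unfolding schreier_generators_def by blast
  ultimately have "generate (G\<lparr>carrier := K\<rparr>) (schreier_generators G K S T) = K"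
    by (simp add: generate_consistent[OF Y K(1)])
  then show ?thesis
    unfolding fin_gen_def using finite_schreier_generators[OF S(1) T(1)] Y
    by (intro exI[of _ "schreier_generators G K S T"]) simp
qed

lemma (in group_hom) fin_gen_image:
  assumes "fin_gen G" and surj: "h ` carrier G = carrier H"
  shows "fin_gen H"
proof -
  obtain S where S: "finite S" "S \<subseteq> carrier G" "generate G S = carrier G"
    using assms(1) unfolding fin_gen_def by blast
  have "generate H (h ` S) = carrier H" using generate_img[OF S(2)] S(3) surj by simp
  moreover have "finite (h ` S)" "h ` S \<subseteq> carrier H" using S(1,2) by auto
  ultimately show ?thesis unfolding fin_gen_def by blast
qed

lemma (in group_hom) group_hom_restrict:
  assumes A: "subgroup A G" and B: "subgroup B H" and "h ` A \<subseteq> B"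
  shows "group_hom (G\<lparr>carrier := A\<rparr>) (H\<lparr>carrier := B\<rparr>) h"
proof (intro group_hom.intro group_hom_axioms.intro)
  show "group (G\<lparr>carrier := A\<rparr>)" by (rule G.subgroup_imp_group[OF A])
  show "group (H\<lparr>carrier := B\<rparr>)" by (rule H.subgroup_imp_group[OF B])
  show "h \<in> hom (G\<lparr>carrier := A\<rparr>) (H\<lparr>carrier := B\<rparr>)"
    using assms(3) subgroup.subset[OF A] unfolding hom_def by (auto simp: subsetD)
qed

lemma (in group) normal_closure_normal:
  assumes x: "x \<in> carrier G"
  shows "normal_closure G x \<lhd> G"
  unfolding normal_closure_def
proof (rule normal_generateI)
  show "{g \<otimes> x \<otimes> inv g |g. g \<in> carrier G} \<subseteq> carrier G" using x by auto
  fix y g assume "y \<in> {g \<otimes> x \<otimes> inv g |g. g \<in> carrier G}" and g: "g \<in> carrier G"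
  then obtain a where a: "a \<in> carrier G" "y = a \<otimes> x \<otimes> inv a" by blast
  then have "g \<otimes> y \<otimes> inv g = (g \<otimes> a) \<otimes> x \<otimes> inv (g \<otimes> a)"
    using g x by (simp add: m_assoc inv_mult_group)
  then show "g \<otimes> y \<otimes> inv g \<in> {g \<otimes> x \<otimes> inv g |g. g \<in> carrier G}" using a g by blast
qed

lemma (in group) normal_closure_subset:
  assumes H: "subgroup H G"
    and T: "T \<subseteq> carrier G" "\<And>g. g \<in> carrier G \<Longrightarrow> \<exists>h\<in>H. \<exists>t\<in>T. g = h \<otimes> t"
    and W: "W \<lhd> G\<lparr>carrier := H\<rparr>" and x: "x \<in> carrier G"
    and conj: "(\<lambda>t. t \<otimes> x \<otimes> inv t) ` T \<subseteq> W"
  shows "normal_closure G x \<subseteq> W"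
proof -
  have "g \<otimes> x \<otimes> inv g \<in> W" if g: "g \<in> carrier G" for g
  proof -
    obtain h t where ht: "h \<in> H" "t \<in> T" "g = h \<otimes> t" using T(2)[OF g] by blast
    have hc: "h \<in> carrier G" and tc: "t \<in> carrier G" using ht H T(1) subgroup.subset by blast+
    have "h \<otimes> (t \<otimes> x \<otimes> inv t) \<otimes> inv h \<in> W"
      using normal.inv_op_closed2[OF W, of h "t \<otimes> x \<otimes> inv t"] conj ht m_inv_consistent[OF H]
      by auto
    moreover have "g \<otimes> x \<otimes> inv g = h \<otimes> (t \<otimes> x \<otimes> inv t) \<otimes> inv h"
      using ht(3) hc tc x by (simp add: m_assoc inv_mult_group)
    ultimately show ?thesis by simp
  qed
  moreover have "subgroup W G" by (rule incl_subgroup[OF H normal_imp_subgroup[OF W]])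
  ultimately show ?thesis unfolding normal_closure_def by (intro generate_subgroup_incl) blast+
qed

lemma (in group_hom) rcos_vimage:
  assumes K: "subgroup K H" and g: "g \<in> carrier G"
  shows "{x \<in> carrier G. h x \<in> K} #> g = {x \<in> carrier G. h x \<in> K #>\<^bsub>H\<^esub> h g}"
proof -
  have "x \<in> {x \<in> carrier G. h x \<in> K} #> g \<longleftrightarrow> h x \<in> K #>\<^bsub>H\<^esub> h g" if x: "x \<in> carrier G" for x
    using subgroup.rcos_module[OF subgroup_vimage[OF K] G.is_group g x]
      subgroup.rcos_module[OF K H.is_group hom_closed[OF g] hom_closed[OF x]] x g
    by simp
  moreover have "{x \<in> carrier G. h x \<in> K} #> g \<subseteq> carrier G"
    using g by (intro G.r_coset_subset_G) auto
  ultimately show ?thesis by blast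
qed

lemma (in group_hom) bij_betw_rcosets_vimage:
  assumes surj: "h ` carrier G = carrier H" and K: "subgroup K H"
  shows "bij_betw (\<lambda>c. {x \<in> carrier G. h x \<in> c}) (rcosets\<^bsub>H\<^esub> K)
    (rcosets {x \<in> carrier G. h x \<in> K})"
proof (rule bij_betw_imageI)
  show "inj_on (\<lambda>c. {x \<in> carrier G. h x \<in> c}) (rcosets\<^bsub>H\<^esub> K)"
  proof (rule inj_on_inverseI)
    fix c assume "c \<in> rcosets\<^bsub>H\<^esub> K"
    then have c: "c \<subseteq> carrier H" by (rule subgroup.rcosets_carrier[OF K H.is_group])
    show "h ` {x \<in> carrier G. h x \<in> c} = c" by (rule image_vimage_on_eq[OF surj c])
  qed
  have "rcosets\<^bsub>H\<^esub> K = (\<lambda>g. K #>\<^bsub>H\<^esub> h g) ` carrier G"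
    unfolding RCOSETS_def surj[symmetric] by auto
  then show "(\<lambda>c. {x \<in> carrier G. h x \<in> c}) ` (rcosets\<^bsub>H\<^esub> K) = rcosets {x \<in> carrier G. h x \<in> K}"
    unfolding RCOSETS_def using rcos_vimage[OF K] by auto
qed

lemma (in group_hom) d_p_le_d_p_image_add_card:
  assumes surj: "h ` carrier G = carrier H" and "fin_gen H"
    and Z: "finite Z" "Z \<subseteq> carrier G"
    and ker: "\<And>W. W \<lhd> G \<Longrightarrow> Z \<subseteq> W \<Longrightarrow> kernel G H h \<subseteq> W"
  shows "d_p p G \<le> d_p p H + card Z"
proof -
  obtain S' where S': "finite S'" "card S' = d_p p H" "generates_mod_frattini_p p H S'"
    using H.ex_generates_mod_frattini_p[OF assms(2)] .
  then have "S' \<subseteq> h ` carrier G" using surj unfolding generates_mod_frattini_p_def by blast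
  then obtain S where S: "S \<subseteq> carrier G" "inj_on h S" "S' = h ` S"
    by (auto simp: subset_image_inj)
  have "generates_mod_frattini_p p G (S \<union> Z)"
    unfolding generates_mod_frattini_p_def
  proof (intro conjI allI impI)
    show "S \<union> Z \<subseteq> carrier G" using S(1) Z(2) by blast
    fix W assume W: "subgroup W G" "S \<union> Z \<subseteq> W" "frattini_p G p \<subseteq> W"
    have "W \<lhd> G"
      using W(1) W(3) G.derived_set_subset_frattini_p by (intro G.normal_if_derived_set_subset) blast+
    then have "kernel G H h \<subseteq> W" using W(2) ker by blast
    moreover have "h ` W = carrier H"
    proof -
      have "frattini_p H p \<subseteq> h ` W" using frattini_p_image_subset[OF surj] W(3) by blast
      moreover have "S' \<subseteq> h ` W" using S(3) W(2) by blast
      ultimately show ?thesis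
        using S'(3) subgroup_img_is_subgroup[OF W(1)] unfolding generates_mod_frattini_p_def by blast
    qed
    ultimately show "W = carrier G" using W(1) surj by (intro subgroup_eq_carrier_if_image) auto
  qed
  moreover have "finite S" using S'(1) S finite_image_iff by blast
  ultimately have "d_p p G \<le> card (S \<union> Z)" using Z(1) by (intro G.d_p_le_card) auto
  also have "\<dots> \<le> card S + card Z" by (rule card_Un_le)
  also have "card S = d_p p H" using S S'(2) by (simp add: card_image)
  finally show ?thesis .
qed

lemma (in group) d_p_vimage_Mod_normal_closure_le:
  fixes x :: 'a
  defines "N \<equiv> normal_closure G x"
  assumes "fin_gen G" and x: "x \<in> carrier G"
    and K: "subgroup K (G Mod N)" and fin: "finite (rcosets\<^bsub>G Mod N\<^esub> K)"
  shows "d_p p (G\<lparr>carrier := {g \<in> carrier G. N #> g \<in> K}\<rparr>)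
    \<le> d_p p ((G Mod N)\<lparr>carrier := K\<rparr>) + card (rcosets\<^bsub>G Mod N\<^esub> K)"
proof -
  interpret N: normal N G unfolding N_def by (rule normal_closure_normal[OF x])
  interpret \<pi>: group_hom G "G Mod N" "\<lambda>a. N #> a" by (rule N.group_hom_Mod)
  have surj: "(\<lambda>a. N #> a) ` carrier G = carrier (G Mod N)" by (simp add: carrier_FactGroup)
  define H where "H = {g \<in> carrier G. N #> g \<in> K}"
  have H: "subgroup H G" unfolding H_def by (rule \<pi>.subgroup_vimage[OF K])
  have "bij_betw (\<lambda>c. {g \<in> carrier G. N #> g \<in> c}) (rcosets\<^bsub>G Mod N\<^esub> K) (rcosets H)"
    unfolding H_def by (rule \<pi>.bij_betw_rcosets_vimage[OF surj K])
  then have idx: "card (rcosets H) = card (rcosets\<^bsub>G Mod N\<^esub> K)" and finH: "finite (rcosets H)"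
    using fin by (auto simp: bij_betw_same_card bij_betw_finite)
  obtain T where T: "finite T" "T \<subseteq> carrier G" "card T \<le> card (rcosets H)"
    "\<And>g. g \<in> carrier G \<Longrightarrow> \<exists>h\<in>H. \<exists>t\<in>T. g = h \<otimes> t"
    using ex_right_transversal[OF H finH] by blast
  let ?conj = "(\<lambda>t. t \<otimes> x \<otimes> inv t) ` T"
  have "?conj \<subseteq> N"
    unfolding N_def normal_closure_def using T(2) by (blast intro: generate.incl)
  moreover have "N \<subseteq> H"
    unfolding H_def using coset_join2[OF _ N.subgroup_axioms] N.subset subgroup.one_closed[OF K]
    by auto
  ultimately have conj_H: "?conj \<subseteq> H" by blast
  interpret \<pi>H: group_hom "G\<lparr>carrier := H\<rparr>" "(G Mod N)\<lparr>carrier := K\<rparr>" "\<lambda>a. N #> a"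
    by (rule \<pi>.group_hom_restrict[OF H K]) (auto simp: H_def)
  have "d_p p (G\<lparr>carrier := H\<rparr>) \<le> d_p p ((G Mod N)\<lparr>carrier := K\<rparr>) + card ?conj"
  proof (rule \<pi>H.d_p_le_d_p_image_add_card)
    show "(\<lambda>a. N #> a) ` carrier (G\<lparr>carrier := H\<rparr>) = carrier ((G Mod N)\<lparr>carrier := K\<rparr>)"
      unfolding H_def using image_vimage_on_eq[OF surj subgroup.subset[OF K]] by simp
    show "fin_gen ((G Mod N)\<lparr>carrier := K\<rparr>)"
      using \<pi>.fin_gen_image[OF \<open>fin_gen G\<close> surj] K fin
      by (rule \<pi>.H.fin_gen_subgroup_of_finite_index)
    show "finite ?conj" using T(1) by simp
    show "?conj \<subseteq> carrier (G\<lparr>carrier := H\<rparr>)" using conj_H by simp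
    fix W assume "W \<lhd> G\<lparr>carrier := H\<rparr>" "?conj \<subseteq> W"
    then have "N \<subseteq> W" unfolding N_def using normal_closure_subset[OF H T(2) T(4) _ x] by blast
    moreover have "kernel (G\<lparr>carrier := H\<rparr>) ((G Mod N)\<lparr>carrier := K\<rparr>) (\<lambda>a. N #> a) \<subseteq> N"
      using N.kernel_Mod subgroup.subset[OF H] unfolding kernel_def by auto
    ultimately show "kernel (G\<lparr>carrier := H\<rparr>) ((G Mod N)\<lparr>carrier := K\<rparr>) (\<lambda>a. N #> a) \<subseteq> W"
      by blast
  qed
  moreover have "card ?conj \<le> card (rcosets\<^bsub>G Mod N\<^esub> K)"
    using card_image_le[OF T(1), of "\<lambda>t. t \<otimes> x \<otimes> inv t"] T(3) idx by linarith
  ultimately show ?thesis unfolding H_def[symmetric] by linarith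
qed

lemma (in group) ex_normal_lift_d_p_le:
  fixes x :: 'a
  defines "N \<equiv> normal_closure G x"
  assumes "fin_gen G" and x: "x \<in> carrier G"
    and K: "K \<lhd> G Mod N" and fin: "finite (rcosets\<^bsub>G Mod N\<^esub> K)"
  obtains H where "H \<lhd> G" "card (rcosets H) = card (rcosets\<^bsub>G Mod N\<^esub> K)"
    "d_p p (G\<lparr>carrier := H\<rparr>) \<le> d_p p ((G Mod N)\<lparr>carrier := K\<rparr>) + card (rcosets\<^bsub>G Mod N\<^esub> K)"
proof
  interpret N: normal N G unfolding N_def by (rule normal_closure_normal[OF x])
  interpret \<pi>: group_hom G "G Mod N" "\<lambda>a. N #> a" by (rule N.group_hom_Mod)
  have K': "subgroup K (G Mod N)" using K by (rule normal_imp_subgroup)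
  show "{g \<in> carrier G. N #> g \<in> K} \<lhd> G" by (rule \<pi>.normal_vimage[OF K])
  show "card (rcosets {g \<in> carrier G. N #> g \<in> K}) = card (rcosets\<^bsub>G Mod N\<^esub> K)"
    using \<pi>.bij_betw_rcosets_vimage[OF _ K'] by (simp add: carrier_FactGroup bij_betw_same_card)
  show "d_p p (G\<lparr>carrier := {g \<in> carrier G. N #> g \<in> K}\<rparr>)
      \<le> d_p p ((G Mod N)\<lparr>carrier := K\<rparr>) + card (rcosets\<^bsub>G Mod N\<^esub> K)"
    using d_p_vimage_Mod_normal_closure_le[OF \<open>fin_gen G\<close> x, of K] K' fin unfolding N_def .
qed

lemma (in group) rcosets_carrier: "rcosets (carrier G) = {carrier G}"
  unfolding RCOSETS_def using coset_join2[OF _ subgroup_self] by auto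

lemma RG_p_le:
  assumes "H \<lhd> G" "card (rcosets\<^bsub>G\<^esub> H) = p ^ k" "p > 0"
  shows "RG_p p G \<le> (real (d_p p (G\<lparr>carrier := H\<rparr>)) - 1) / real (card (rcosets\<^bsub>G\<^esub> H))"
proof -
  have "-1 \<le> (real (d_p p (G\<lparr>carrier := H'\<rparr>)) - 1) / real (card (rcosets\<^bsub>G\<^esub> H'))"
    if "card (rcosets\<^bsub>G\<^esub> H') = p ^ k'" for H' k'
  proof -
    have "real (card (rcosets\<^bsub>G\<^esub> H')) \<ge> 1" using that \<open>p > 0\<close> by simp
    then show ?thesis by (simp add: divide_simps)
  qed
  then have "bdd_below {(real (d_p p (G\<lparr>carrier := H\<rparr>)) - 1) / real (card (rcosets\<^bsub>G\<^esub> H)) | H.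
                    H \<lhd> G \<and> (\<exists>k. card (rcosets\<^bsub>G\<^esub> H) = p ^ k)}"
    by (intro bdd_belowI[of _ "-1"]) blast
  then show ?thesis unfolding RG_p_def using assms(1,2) by (intro cInf_lower) blast+
qed

lemma (in group) RG_p_greatest:
  assumes "\<And>H k. H \<lhd> G \<Longrightarrow> card (rcosets H) = p ^ k \<Longrightarrow>
    c \<le> (real (d_p p (G\<lparr>carrier := H\<rparr>)) - 1) / real (card (rcosets H))"
  shows "c \<le> RG_p p G"
  unfolding RG_p_def
proof (rule cInf_greatest)
  have "card (rcosets (carrier G)) = p ^ 0" by (simp add: rcosets_carrier)
  then show "{(real (d_p p (G\<lparr>carrier := H\<rparr>)) - 1) / real (card (rcosets H)) | H.
      H \<lhd> G \<and> (\<exists>k. card (rcosets H) = p ^ k)} \<noteq> {}"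
    using normal_self by blast
qed (use assms in blast)

theorem corollary3p3:
  fixes G :: "('a, 'b) monoid_scheme" and p :: nat and x :: 'a
  assumes "group G" and "fin_gen G" and "Factorial_Ring.prime p" and "x \<in> carrier G"
  shows "RG_p p (G Mod normal_closure G x) \<ge> RG_p p G - 1"
proof -
  interpret group G by fact
  let ?N = "normal_closure G x"
  have "p > 0" using assms(3) prime_gt_0_nat by blast
  interpret N: normal ?N G by (rule normal_closure_normal[OF assms(4)])
  show ?thesis
  proof (rule group.RG_p_greatest[OF N.factorgroup_is_group])
    fix K k assume K: "K \<lhd> G Mod ?N" and idx: "card (rcosets\<^bsub>G Mod ?N\<^esub> K) = p ^ k"
    let ?n = "real (card (rcosets\<^bsub>G Mod ?N\<^esub> K))"
    have "card (rcosets\<^bsub>G Mod ?N\<^esub> K) > 0" using idx \<open>p > 0\<close> by simp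
    then have "?n > 0" and "finite (rcosets\<^bsub>G Mod ?N\<^esub> K)" by (simp_all add: card_ge_0_finite)
    then obtain H where H: "H \<lhd> G" "card (rcosets\<^bsub>G\<^esub> H) = card (rcosets\<^bsub>G Mod ?N\<^esub> K)"
      "d_p p (G\<lparr>carrier := H\<rparr>) \<le> d_p p ((G Mod ?N)\<lparr>carrier := K\<rparr>) + card (rcosets\<^bsub>G Mod ?N\<^esub> K)"
      using ex_normal_lift_d_p_le[OF assms(2,4) K] by blast
    have "RG_p p G \<le> (real (d_p p (G\<lparr>carrier := H\<rparr>)) - 1) / ?n"
      using RG_p_le[OF H(1)] H(2) idx \<open>p > 0\<close> by simp
    also have "\<dots> \<le> (real (d_p p ((G Mod ?N)\<lparr>carrier := K\<rparr>)) - 1) / ?n + 1"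
      using H(3) \<open>?n > 0\<close> by (simp add: field_simps)
    finally show "RG_p p G - 1 \<le> (real (d_p p ((G Mod ?N)\<lparr>carrier := K\<rparr>)) - 1) / ?n" by simp
  qed
qed

end
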